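(* Let $\beta$ be an ordered partition of $N$ and let $\zeta\in(\mathfrak t')^*_\beta$ be $\beta$-generic with $\zeta(c)\neq0$. Then (i) the map $W\to(\mathfrak t')^*$, $w\mapsto w(\zeta)$ (affine action) is injective; (ii) the map $X^\beta\to(\mathfrak t')^*/\bar W$, $x\mapsto\bar W\cdot x(\zeta)$, is injective. (Analogously, if $\zeta\in\bar{\mathfrak t}^*_\beta$ is $\beta$-generic, then $w\mapsto w(\zeta)$ is injective on $\bar W$.)
   Context: Fix an integer $N\ge2$. Let $\bar{\mathfrak t}=\bigoplus_{i=1}^N\mathbb C\epsilon_i^\vee$, $\mathfrak t'=\bar{\mathfrak t}\oplus\mathbb Cc$, $\epsilon_1,\dots,\epsilon_N\in\bar{\mathfrak t}^*$ the dual basis, and $(\mathfrak t')^*=\bar{\mathfrak t}^*\oplus\mathbb Cc^*$ with $\epsilon_i(c)=0$, $c^*(c)=1$, $c^*(\bar{\mathfrak t})=0$. Put $(\epsilon_i,\epsilon_j)=\delta_{ij}$ and for $\zeta\in(\mathfrak t')^*$, $\bar\alpha=\sum a_i\epsilon_i$, $(\zeta,\bar\alpha)=\sum_ia_i\zeta(\epsilon_i^\vee)$. $\bar R=\{\alpha_{ij}=\epsilon_i-\epsilon_j:i\ne j\}$, $\bar R_+=\{\alpha_{ij}:i<j\}$, $\alpha_i=\alpha_{i,i+1}$, $\bar\Pi=\{\alpha_1,\dots,\alpha_{N-1}\}$. With formal $\delta$, $R=\{\bar\alpha+k\delta:\bar\alpha\in\bar R,k\in\mathbb Z\}$, $R_+=\{\bar\alpha+k\delta:\bar\alpha\in\bar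 R_+,k\ge0\}\cup\{-\bar\alpha+k\delta:\bar\alpha\in\bar R_+,k>0\}$, $R_-=R\setminus R_+$; $(\zeta,\bar\alpha+k\delta)=(\zeta,\bar\alpha)+k\zeta(c)$. $\bar P=\bigoplus\mathbb Z\epsilon_i$, $\bar P_-=\{\eta\in\bar P:(\eta,\alpha)\le0\ \forall\alpha\in\bar R_+\}$, $\bar W=\mathfrak S_N$ permuting indices, $W=\bar W\ltimes\bar P$ (elements $wt_\eta$, $wt_\eta w^{-1}=t_{w(\eta)}$), acting on $R$ by $w(\bar\alpha+k\delta)=w(\bar\alpha)+k\delta$, $t_\eta(\bar\alpha+k\delta)=\bar\alpha+(k-(\eta,\bar\alpha))\delta$, and on $(\mathfrak t')^*$ by the affine action: $w$ permutes the $\epsilon_i$ and fixes $c^*$, $t_\eta(\zeta)=\zeta+\zeta(c)\eta$. $l(w)=\#(R_+\cap w^{-1}(R_-))$. An ordered partition $\beta$ of $N$ gives blocks of consecutive indices of sizes $\beta_1,\dots,\beta_r$; $\bar R_\beta=\{\alpha_{ij}:i,j\text{ in the same block}\}$, $\bar R_{\beta,+}=\bar R_\beta\cap\bar R_+$, $\bar\Pi_\beta=\bar\Pi\cap\bar R_\beta$, $\bar W_\beta=\langle s_\alpha:\alpha\in\bar\Pi_\beta\rangle$, $W^\beta=\{w\in W:l(wu)\ge l(w)\ \forall u\in\bar W_\beta\}$, $\bar W^\beta=W^\beta\cap\bar W$. $(\mathfrak t')^*_\beta=\{\zeta\in(\mathfrak t')^*:(\zeta,\alpha)=-1\ \forall\alpha\in\bar\Pi_\beta\}$,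 $\bar{\mathfrak t}^*_\beta$ analogously in $\bar{\mathfrak t}^*$. $\zeta\in(\mathfrak t')^*_\beta$ (resp. $\bar{\mathfrak t}^*_\beta$) is $\beta$-generic if $(\zeta,\alpha)\notin\{1,0,-1\}$ for all $\alpha\in R_+\setminus\bar R_{\beta,+}$ (resp. $\bar R_+\setminus\bar R_{\beta,+}$). For $w\in\bar W^\beta$, $\eta_w\in\bar P_-$ is defined by $(\eta_w,\epsilon_1)=0$ and $(\eta_w,\alpha_i)=-1$ if $\alpha_i\in w(\bar R_+\setminus\bar R_{\beta,+})$, $0$ otherwise; $\bar P_-(w)=\{\eta+\eta_w:\eta\in\bar P_-\}$; $X^\beta=\{t_\eta w:w\in\bar W^\beta,\eta\in\bar P_-(w)\}$. *)

theory Defs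
  imports Complex_Main "HOL-Combinatorics.Combinatorics"
begin

text \<open>Indices run over {1..N}. An element zeta of (t')^* is encoded as a pair
 (a, k) with a i = zeta(eps_i^vee) for i in {1..N} (a i = 0 outside {1..N}) and k = zeta(c).
 Then (zeta, alpha_ij + n delta) = a i - a j + n k.
 An element of W = Wbar |x Pbar is encoded by the unique pair (w, eta) with the element
 equal to w t_eta, where w permutes {1..N} and eta : nat => int vanishes outside {1..N}.\<close>

definition ordered_partition :: "nat \<Rightarrow> nat list \<Rightarrow> bool" where
  "ordered_partition N \<beta> \<longleftrightarrow> (\<forall>x\<in>set \<beta>. 0 < x) \<and> sum_list \<beta> = N"

text \<open>Index of the block containing i (blocks of consecutive indices of sizes beta_1, ...).\<close>
definition blk :: "nat list \<Rightarrow> nat \<Rightarrow> nat" where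
  "blk \<beta> i = (LEAST r. i \<le> sum_list (take r \<beta>))"

definition same_block :: "nat list \<Rightarrow> nat \<Rightarrow> nat \<Rightarrow> bool" where
  "same_block \<beta> i j \<longleftrightarrow> blk \<beta> i = blk \<beta> j"

definition tdual :: "nat \<Rightarrow> ((nat \<Rightarrow> complex) \<times> complex) set" where
  "tdual N = {(a, k). \<forall>i. i \<notin> {1..N} \<longrightarrow> a i = 0}"

definition tbar :: "nat \<Rightarrow> (nat \<Rightarrow> complex) set" where
  "tbar N = {a. \<forall>i. i \<notin> {1..N} \<longrightarrow> a i = 0}"

definition Pbar :: "nat \<Rightarrow> (nat \<Rightarrow> int) set" where
  "Pbar N = {\<eta>. \<forall>i. i \<notin> {1..N} \<longrightarrow> \<eta> i = 0}"

definition Wbar :: "nat \<Rightarrow> (nat \<Rightarrow> nat) set" where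
  "Wbar N = {w. w permutes {1..N}}"

definition Wgrp :: "nat \<Rightarrow> ((nat \<Rightarrow> nat) \<times> (nat \<Rightarrow> int)) set" where
  "Wgrp N = Wbar N \<times> Pbar N"

text \<open>Affine action of w t_eta: (w t_eta)(zeta) = w(zeta + zeta(c) eta).\<close>
definition aff_act :: "(nat \<Rightarrow> nat) \<times> (nat \<Rightarrow> int) \<Rightarrow> (nat \<Rightarrow> complex) \<times> complex
    \<Rightarrow> (nat \<Rightarrow> complex) \<times> complex" where
  "aff_act x z = (let (w, \<eta>) = x; (a, k) = z in
      (\<lambda>j. a (inv w j) + k * of_int (\<eta> (inv w j)), k))"

definition perm_act :: "(nat \<Rightarrow> nat) \<Rightarrow> (nat \<Rightarrow> complex) \<Rightarrow> (nat \<Rightarrow> complex)" where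
  "perm_act w a = (\<lambda>j. a (inv w j))"

definition orbit :: "nat \<Rightarrow> (nat \<Rightarrow> complex) \<times> complex \<Rightarrow> ((nat \<Rightarrow> complex) \<times> complex) set" where
  "orbit N z = {aff_act (u, \<lambda>_. 0) z | u. u \<in> Wbar N}"

text \<open>alpha_ij + n delta is in R_+ (for i, j distinct).\<close>
definition pos_root :: "nat \<Rightarrow> nat \<Rightarrow> int \<Rightarrow> bool" where
  "pos_root i j n \<longleftrightarrow> (i < j \<and> 0 \<le> n) \<or> (j < i \<and> 0 < n)"

text \<open>Length l(w t_eta) = #(R_+ cap (w t_eta)^{-1}(R_-)), using
 (w t_eta)(alpha_ij + n delta) = alpha_{w i, w j} + (n - (eta_i - eta_j)) delta.\<close>
definition aff_len :: "nat \<Rightarrow> (nat \<Rightarrow> nat) \<times> (nat \<Rightarrow> int) \<Rightarrow> nat" where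
  "aff_len N x = (let (w, \<eta>) = x in
     card {(i, j, n). i \<in> {1..N} \<and> j \<in> {1..N} \<and> i \<noteq> j \<and> pos_root i j n
            \<and> \<not> pos_root (w i) (w j) (n - (\<eta> i - \<eta> j))})"

inductive_set Wbar_beta :: "nat \<Rightarrow> nat list \<Rightarrow> (nat \<Rightarrow> nat) set" for N \<beta> where
  id: "id \<in> Wbar_beta N \<beta>"
| step: "u \<in> Wbar_beta N \<beta> \<Longrightarrow> i \<in> {1..<N} \<Longrightarrow> same_block \<beta> i (Suc i)
          \<Longrightarrow> transpose i (Suc i) \<circ> u \<in> Wbar_beta N \<beta>"

definition Wbar_min :: "nat \<Rightarrow> nat list \<Rightarrow> (nat \<Rightarrow> nat) set" where
  "Wbar_min N \<beta> = {w \<in> Wbar N. \<forall>u \<in> Wbar_beta N \<beta>.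
        aff_len N (w \<circ> u, \<lambda>_. 0) \<ge> aff_len N (w, \<lambda>_. 0)}"

definition Pbar_minus :: "nat \<Rightarrow> (nat \<Rightarrow> int) set" where
  "Pbar_minus N = {\<eta> \<in> Pbar N. \<forall>i\<in>{1..N}. \<forall>j\<in>{1..N}. i < j \<longrightarrow> \<eta> i - \<eta> j \<le> 0}"

text \<open>alpha_m in w(Rbar_+ - Rbar_{beta,+}).\<close>
definition simple_in_image :: "nat \<Rightarrow> nat list \<Rightarrow> (nat \<Rightarrow> nat) \<Rightarrow> nat \<Rightarrow> bool" where
  "simple_in_image N \<beta> w m \<longleftrightarrow> (\<exists>i\<in>{1..N}. \<exists>j\<in>{1..N}. i < j \<and> \<not> same_block \<beta> i j
        \<and> w i = m \<and> w j = Suc m)"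

definition eta_w :: "nat \<Rightarrow> nat list \<Rightarrow> (nat \<Rightarrow> nat) \<Rightarrow> (nat \<Rightarrow> int)" where
  "eta_w N \<beta> w = (THE \<eta>. \<eta> \<in> Pbar N \<and> \<eta> 1 = 0 \<and>
      (\<forall>m\<in>{1..<N}. \<eta> m - \<eta> (Suc m) = (if simple_in_image N \<beta> w m then -1 else 0)))"

definition Pbar_minus_w :: "nat \<Rightarrow> nat list \<Rightarrow> (nat \<Rightarrow> nat) \<Rightarrow> (nat \<Rightarrow> int) set" where
  "Pbar_minus_w N \<beta> w = {\<lambda>i. \<eta> i + eta_w N \<beta> w i | \<eta>. \<eta> \<in> Pbar_minus N}"

text \<open>X^beta = {t_eta w}; since t_eta w = w t_{w^{-1}(eta)} and (w^{-1} eta)_i = eta_{w i},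
 in the (w, eta) encoding of W the element t_eta w is (w, eta o w).\<close>
definition Xbeta :: "nat \<Rightarrow> nat list \<Rightarrow> ((nat \<Rightarrow> nat) \<times> (nat \<Rightarrow> int)) set" where
  "Xbeta N \<beta> = {(w, \<eta> \<circ> w) | w \<eta>. w \<in> Wbar_min N \<beta> \<and> \<eta> \<in> Pbar_minus_w N \<beta> w}"

definition tdual_beta :: "nat \<Rightarrow> nat list \<Rightarrow> ((nat \<Rightarrow> complex) \<times> complex) set" where
  "tdual_beta N \<beta> = {(a, k) \<in> tdual N. \<forall>i\<in>{1..<N}. same_block \<beta> i (Suc i) \<longrightarrow> a i - a (Suc i) = -1}"

definition tbar_beta :: "nat \<Rightarrow> nat list \<Rightarrow> (nat \<Rightarrow> complex) set" where
  "tbar_beta N \<beta> = {a \<in> tbar N. \<forall>i\<in>{1..<N}. same_block \<beta> i (Suc i) \<longrightarrow> a i - a (Suc i) = -1}"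

text \<open>beta-generic: (zeta, alpha) not in {1,0,-1} for alpha in R_+ - Rbar_{beta,+}.\<close>
definition generic :: "nat \<Rightarrow> nat list \<Rightarrow> (nat \<Rightarrow> complex) \<times> complex \<Rightarrow> bool" where
  "generic N \<beta> z = (let (a, k) = z in
     \<forall>i\<in>{1..N}. \<forall>j\<in>{1..N}. \<forall>n::int. i \<noteq> j \<and> pos_root i j n \<and> \<not> (n = 0 \<and> same_block \<beta> i j)
        \<longrightarrow> a i - a j + of_int n * k \<notin> {1, 0, -1})"

definition generic_bar :: "nat \<Rightarrow> nat list \<Rightarrow> (nat \<Rightarrow> complex) \<Rightarrow> bool" where
  "generic_bar N \<beta> a \<longleftrightarrow>
     (\<forall>i\<in>{1..N}. \<forall>j\<in>{1..N}. i < j \<and> \<not> same_block \<beta> i j \<longrightarrow> a i - a j \<notin> {1, 0, -1})"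

end

theory Submission
  imports Defs "HOL-Library.Product_Lexorder"
begin

(* A beta-generic zeta = (a, k) vanishes on no real root alpha_ij + n delta: on the roots of
   Rbar_beta the relations (zeta, alpha_i) = -1 make a i increase by 1 from each index to the next
   within a block, and on all other roots this is genericity. So the coordinates a i + k eta i of (w t_eta)(zeta)
   determine w, and then eta since k is nonzero; this gives (i), and (iii) in the same way.

   For (ii), if x'(zeta) = u x(zeta) with u in Wbar, then x' = u x by (i). To x = t_eta w in X^beta
   attach the key m |-> (eta m, - block of w^-1 m, w^-1 m). It is lexicographically strictly
   increasing on {1..N}: eta is weakly increasing, a tie eta m = eta (m+1) forbids alpha_m in
   w(Rbar_+ - Rbar_beta,+), and the minimal coset representative w is increasing on each block.
   The key of u x is the key of x composed with u^-1, so u^-1 is a strictly increasing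
   permutation, hence the identity. *)

lemma transp_chain:
  assumes "transp R" "i < j" "\<And>m. i \<le> m \<Longrightarrow> m < j \<Longrightarrow> R (f m) (f (Suc m))"
  shows "R (f i) (f j)"
  using assms(2,3)
proof (induction j)
  case 0
  then show ?case by simp
next
  case (Suc j)
  show ?case
  proof (cases "i = j")
    case True
    then show ?thesis using Suc.prems by simp
  next
    case False
    then have "R (f i) (f j)" using Suc by simp
    moreover have "R (f j) (f (Suc j))" using Suc.prems False by simp
    ultimately show ?thesis by (rule transpD[OF assms(1)])
  qed
qed

lemma strict_mono_on_if_Suc_less:
  fixes f :: "nat \<Rightarrow> 'a::order"
  assumes "\<And>m. m \<in> {l..<u} \<Longrightarrow> f m < f (Suc m)"
  shows "strict_mono_on {l..u} f"
proof (rule strict_mono_onI)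
  fix r s assume rs: "r \<in> {l..u}" "s \<in> {l..u}" "r < s"
  show "f r < f s"
    by (rule transp_chain[of "(<)"]) (use rs in \<open>auto intro: assms\<close>)
qed

lemma blk_mono:
  assumes "ordered_partition N \<beta>" "i \<le> j" "j \<le> N"
  shows "blk \<beta> i \<le> blk \<beta> j"
proof -
  have "j \<le> sum_list (take (length \<beta>) \<beta>)"
    using assms by (simp add: ordered_partition_def)
  then have "j \<le> sum_list (take (blk \<beta> j) \<beta>)"
    unfolding blk_def by (rule LeastI)
  then have "i \<le> sum_list (take (blk \<beta> j) \<beta>)"
    using assms(2) by simp
  then show ?thesis
    unfolding blk_def by (rule Least_le)
qed

lemma same_block_Suc_between:
  assumes "ordered_partition N \<beta>" "i \<le> m" "m < j" "j \<le> N" "same_block \<beta> i j"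
  shows "same_block \<beta> m (Suc m)"
  using blk_mono[OF assms(1), of i m] blk_mono[OF assms(1), of m "Suc m"]
    blk_mono[OF assms(1), of "Suc m" j] assms(2-5)
  unfolding same_block_def by simp

lemma same_block_chain:
  assumes "ordered_partition N \<beta>" "transp R"
    and step: "\<And>m. m \<in> {1..<N} \<Longrightarrow> same_block \<beta> m (Suc m) \<Longrightarrow> R (f m) (f (Suc m))"
    and "1 \<le> i" "i < j" "j \<le> N" "same_block \<beta> i j"
  shows "R (f i) (f j)"
  using transp_chain[OF assms(2,5)] step same_block_Suc_between[OF assms(1) _ _ assms(6,7)] assms(4,6)
  by auto

lemma same_block_values_distinct:
  fixes a :: "nat \<Rightarrow> complex"
  assumes op: "ordered_partition N \<beta>"
    and a: "\<forall>m\<in>{1..<N}. same_block \<beta> m (Suc m) \<longrightarrow> a m - a (Suc m) = -1"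
    and "i \<in> {1..N}" "j \<in> {1..N}" "i \<noteq> j" "same_block \<beta> i j"
  shows "a i \<noteq> a j"
proof -
  have less: "Re (a i) < Re (a j)"
    if "i \<in> {1..N}" "j \<in> {1..N}" "i < j" "same_block \<beta> i j" for i j
  proof (rule same_block_chain[OF op, of "\<lambda>x y. Re x < Re y"])
    show "transp (\<lambda>x y. Re x < Re y)"
      by (rule transpI) simp
    show "Re (a m) < Re (a (Suc m))" if "m \<in> {1..<N}" "same_block \<beta> m (Suc m)" for m
    proof -
      have "a (Suc m) = a m + 1" using a that by (simp add: algebra_simps)
      then show ?thesis by simp
    qed
  qed (use that in auto)
  show ?thesis
  proof (cases "i < j")
    case True
    then show ?thesis using less[of i j] assms(3,4,6) by auto
  next
    case False
    then have "j < i" using assms(5) by simp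
    then show ?thesis using less[of j i] assms(3,4,6) by (auto simp: same_block_def)
  qed
qed

lemma generic_root_value_ne_0:
  assumes op: "ordered_partition N \<beta>"
    and td: "(a, k) \<in> tdual_beta N \<beta>" and g: "generic N \<beta> (a, k)"
    and "i \<in> {1..N}" "j \<in> {1..N}" "i \<noteq> j"
  shows "a i - a j + of_int n * k \<noteq> 0"
proof -
  have pos: "a i - a j + of_int n * k \<noteq> 0"
    if "i \<in> {1..N}" "j \<in> {1..N}" "i \<noteq> j" "pos_root i j n" for i j n
  proof (cases "n = 0 \<and> same_block \<beta> i j")
    case True
    then show ?thesis
      using same_block_values_distinct[OF op _ that(1-3)] td by (simp add: tdual_beta_def)
  next
    case False
    then show ?thesis using g that unfolding generic_def by auto
  qed
  show ?thesis
  proof (cases "pos_root i j n")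
    case True
    then show ?thesis using pos assms(4-6) by blast
  next
    case False
    then have "pos_root j i (- n)"
      using assms(6) unfolding pos_root_def by auto
    then have "a j - a i + of_int (- n) * k \<noteq> 0"
      using pos assms(4-6) by blast
    then show ?thesis by (simp add: algebra_simps)
  qed
qed

lemma generic_bar_inj_on:
  assumes "ordered_partition N \<beta>" "b \<in> tbar_beta N \<beta>" "generic_bar N \<beta> b"
  shows "inj_on b {1..N}"
proof (rule inj_onI, rule ccontr)
  fix i j assume ij: "i \<in> {1..N}" "j \<in> {1..N}" "b i = b j" "i \<noteq> j"
  show False
  proof (cases "same_block \<beta> i j")
    case True
    then show False
      using same_block_values_distinct[OF assms(1) _ ij(1,2,4)] assms(2) ij(3)
      by (simp add: tbar_beta_def)
  next
    case False
    have "b i \<noteq> b j" if "i \<in> {1..N}" "j \<in> {1..N}" "i < j" "\<not> same_block \<beta> i j" for i j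
      using assms(3) that unfolding generic_bar_def by auto
    then show False
      using False ij by (metis linorder_neqE_nat same_block_def)
  qed
qed

lemma permutes_eq_if_comp_inv_eq:
  assumes w: "w permutes S" and w': "w' permutes S"
    and sep: "\<And>i i'. i \<in> S \<Longrightarrow> i' \<in> S \<Longrightarrow> f i = g i' \<Longrightarrow> i = i'"
    and eq: "f \<circ> inv w = g \<circ> inv w'"
  shows "w = w'"
proof -
  have "inv w j = inv w' j" for j
  proof (cases "j \<in> S")
    case True
    then show ?thesis
      using sep[of "inv w j" "inv w' j"] fun_cong[OF eq, of j]
        permutes_in_image[OF permutes_inv[OF w]] permutes_in_image[OF permutes_inv[OF w']]
      by simp
  next
    case False
    then show ?thesis
      using permutes_not_in[OF permutes_inv[OF w]] permutes_not_in[OF permutes_inv[OF w']] by simp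
  qed
  then show ?thesis
    by (metis ext inv_inv_eq permutes_bij w w')
qed

theorem inj_on_aff_act:
  assumes op: "ordered_partition N \<beta>"
    and td: "(a, k) \<in> tdual_beta N \<beta>" and g: "generic N \<beta> (a, k)" and k: "k \<noteq> 0"
  shows "inj_on (\<lambda>x. aff_act x (a, k)) (Wgrp N)"
proof (rule inj_onI)
  fix x y
  assume "x \<in> Wgrp N" "y \<in> Wgrp N" and eq: "aff_act x (a, k) = aff_act y (a, k)"
  then obtain w \<eta> w' \<eta>' where xy: "x = (w, \<eta>)" "y = (w', \<eta>')"
    and w: "w permutes {1..N}" and w': "w' permutes {1..N}" and \<eta>: "\<eta> \<in> Pbar N" "\<eta>' \<in> Pbar N"
    by (auto simp: Wgrp_def Wbar_def)
  let ?f = "\<lambda>\<eta> i. a i + k * of_int (\<eta> i)"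
  have comp: "?f \<eta> \<circ> inv w = ?f \<eta>' \<circ> inv w'"
    using eq xy by (simp add: aff_act_def fun_eq_iff)
  have ww': "w = w'"
  proof (rule permutes_eq_if_comp_inv_eq[OF w w' _ comp])
    fix i i' assume "i \<in> {1..N}" "i' \<in> {1..N}" "?f \<eta> i = ?f \<eta>' i'"
    then show "i = i'"
      using generic_root_value_ne_0[OF op td g, of i i' "\<eta> i - \<eta>' i'"]
      by (auto simp: algebra_simps)
  qed
  have "\<eta> i = \<eta>' i" for i
  proof (cases "i \<in> {1..N}")
    case True
    then show ?thesis
      using fun_cong[OF comp, of "w' i"] k unfolding ww' by (simp add: permutes_inverses(2)[OF w'])
  next
    case False
    then show ?thesis using \<eta> by (simp add: Pbar_def)
  qed
  then show "x = y" using xy ww' by auto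
qed

theorem inj_on_perm_act:
  assumes "ordered_partition N \<beta>" "b \<in> tbar_beta N \<beta>" "generic_bar N \<beta> b"
  shows "inj_on (\<lambda>w. perm_act w b) (Wbar N)"
proof (rule inj_onI)
  fix w w' assume "w \<in> Wbar N" "w' \<in> Wbar N" "perm_act w b = perm_act w' b"
  then show "w = w'"
    using inj_onD[OF generic_bar_inj_on[OF assms]]
    by (intro permutes_eq_if_comp_inv_eq[of w "{1..N}" w' b b]) (auto simp: Wbar_def perm_act_def comp_def)
qed

definition inversions :: "nat \<Rightarrow> (nat \<Rightarrow> nat) \<Rightarrow> (nat \<times> nat) set" where
  "inversions N w = {(i, j). i \<in> {1..N} \<and> j \<in> {1..N} \<and> i < j \<and> w j < w i}"

lemma finite_inversions: "finite (inversions N w)"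
  unfolding inversions_def by (rule finite_subset[of _ "{1..N} \<times> {1..N}"]) auto

lemma aff_len_eq_card_inversions:
  assumes "inj w"
  shows "aff_len N (w, \<lambda>_. 0) = card (inversions N w)"
proof -
  have "{(i, j, n). i \<in> {1..N} \<and> j \<in> {1..N} \<and> i \<noteq> j \<and> pos_root i j n
            \<and> \<not> pos_root (w i) (w j) (n - (0 - 0))} = (\<lambda>(i, j). (i, j, 0::int)) ` inversions N w"
  proof (rule set_eqI)
    fix t :: "nat \<times> nat \<times> int"
    obtain i j n where t: "t = (i, j, n)" by (cases t) auto
    have "w i \<noteq> w j" if "i \<noteq> j" using assms that by (meson injD)
    then show "t \<in> {(i, j, n). i \<in> {1..N} \<and> j \<in> {1..N} \<and> i \<noteq> j \<and> pos_root i j n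
            \<and> \<not> pos_root (w i) (w j) (n - (0 - 0))} \<longleftrightarrow> t \<in> (\<lambda>(i, j). (i, j, 0::int)) ` inversions N w"
      unfolding t inversions_def pos_root_def by (auto simp: image_iff)
  qed
  moreover have "inj_on (\<lambda>(i, j). (i, j, 0::int)) (inversions N w)"
    by (auto simp: inj_on_def)
  ultimately show ?thesis
    unfolding aff_len_def by (simp add: card_image)
qed

lemma card_inversions_comp_transpose_less:
  assumes m: "m \<in> {1..<N}" and desc: "w (Suc m) < w m"
  shows "card (inversions N (w \<circ> transpose m (Suc m))) < card (inversions N w)"
proof -
  define s where "s = transpose m (Suc m)"
  have s: "s permutes {1..N}"
    unfolding s_def using m by (intro permutes_swap_id) auto
  have "(\<lambda>(p, q). (s p, s q)) ` inversions N (w \<circ> s) \<subseteq> inversions N w - {(m, Suc m)}"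
  proof
    fix t assume "t \<in> (\<lambda>(p, q). (s p, s q)) ` inversions N (w \<circ> s)"
    then obtain p q where t: "t = (s p, s q)"
      and pq: "p \<in> {1..N}" "q \<in> {1..N}" "p < q" "w (s q) < w (s p)"
      by (auto simp: inversions_def)
    have "s p \<in> {1..N}" "s q \<in> {1..N}"
      using pq permutes_in_image[OF s] by auto
    moreover have "s p < s q" "(s p, s q) \<noteq> (m, Suc m)"
      using pq desc unfolding s_def transpose_def by (auto split: if_splits)
    ultimately show "t \<in> inversions N w - {(m, Suc m)}"
      using t pq by (auto simp: inversions_def)
  qed
  moreover have "inj_on (\<lambda>(p, q). (s p, s q)) (inversions N (w \<circ> s))"
    using permutes_inj[OF s] by (auto simp: inj_on_def dest: injD)
  ultimately have "card (inversions N (w \<circ> s)) \<le> card (inversions N w - {(m, Suc m)})"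
    using finite_inversions[of N w] by (metis card_inj_on_le finite_Diff)
  also have "\<dots> < card (inversions N w)"
    using m desc finite_inversions[of N w] by (intro card_Diff1_less) (auto simp: inversions_def)
  finally show ?thesis
    unfolding s_def .
qed

lemma Wbar_min_ascent:
  assumes w: "w \<in> Wbar_min N \<beta>" and m: "m \<in> {1..<N}" "same_block \<beta> m (Suc m)"
  shows "w m < w (Suc m)"
proof (rule ccontr)
  assume "\<not> w m < w (Suc m)"
  moreover have inj: "inj w"
    using w by (auto simp: Wbar_min_def Wbar_def permutes_inj)
  then have "w m \<noteq> w (Suc m)"
    by (meson injD n_not_Suc_n)
  ultimately have desc: "w (Suc m) < w m"
    by simp
  have "transpose m (Suc m) \<in> Wbar_beta N \<beta>"
    using Wbar_beta.step[OF Wbar_beta.id m] by simp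
  then have "aff_len N (w, \<lambda>_. 0) \<le> aff_len N (w \<circ> transpose m (Suc m), \<lambda>_. 0)"
    using w by (auto simp: Wbar_min_def)
  moreover have "inj (w \<circ> transpose m (Suc m))"
    using inj by (simp add: inj_compose)
  ultimately show False
    using card_inversions_comp_transpose_less[OF m(1) desc] inj
    by (simp add: aff_len_eq_card_inversions)
qed

lemma Wbar_min_less_on_block:
  assumes "ordered_partition N \<beta>" "w \<in> Wbar_min N \<beta>"
    and "i \<in> {1..N}" "j \<in> {1..N}" "i < j" "same_block \<beta> i j"
  shows "w i < w j"
  by (rule same_block_chain[OF assms(1), of "(<)" w])
    (use assms(3-6) in \<open>simp_all add: Wbar_min_ascent[OF assms(2)]\<close>)

lemma Pbar_eqI:
  assumes "\<eta> \<in> Pbar N" "\<eta>' \<in> Pbar N" "\<eta> 1 = \<eta>' 1"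
    and "\<forall>m\<in>{1..<N}. \<eta> m - \<eta> (Suc m) = \<eta>' m - \<eta>' (Suc m)"
  shows "\<eta> = \<eta>'"
proof
  fix m show "\<eta> m = \<eta>' m"
  proof (induction m)
    case 0
    then show ?case using assms(1,2) by (simp add: Pbar_def)
  next
    case (Suc m)
    consider "Suc m \<notin> {1..N}" | "m = 0" | "m \<in> {1..<N}"
      by fastforce
    then show ?case
    proof cases
      case 1
      then show ?thesis using assms(1,2) by (simp add: Pbar_def)
    next
      case 2
      then show ?thesis using assms(3) by simp
    next
      case 3
      then have "\<eta> m - \<eta> (Suc m) = \<eta>' m - \<eta>' (Suc m)"
        using assms(4) by blast
      then show ?thesis using Suc.IH by simp
    qed
  qed
qed

lemma eta_w_spec:
  "eta_w N \<beta> w \<in> Pbar N \<and> eta_w N \<beta> w 1 = 0 \<and>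
     (\<forall>m\<in>{1..<N}. eta_w N \<beta> w m - eta_w N \<beta> w (Suc m) = (if simple_in_image N \<beta> w m then -1 else 0))"
proof -
  let ?S = "simple_in_image N \<beta> w"
  let ?P = "\<lambda>\<eta>. \<eta> \<in> Pbar N \<and> \<eta> 1 = 0 \<and> (\<forall>m\<in>{1..<N}. \<eta> m - \<eta> (Suc m) = (if ?S m then -1 else 0))"
  define e where "e m = (if m \<in> {1..N} then int (card {t \<in> {1..<m}. ?S t}) else 0)" for m
  have "{t \<in> {1..<Suc m}. ?S t} = (if ?S m then insert m {t \<in> {1..<m}. ?S t} else {t \<in> {1..<m}. ?S t})"
    if "1 \<le> m" for m
    using that by (auto simp: less_Suc_eq)
  then have "?P e"
    unfolding e_def Pbar_def by auto
  moreover have "\<eta> = e" if "?P \<eta>" for \<eta>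
    using that \<open>?P e\<close> by (intro Pbar_eqI) auto
  ultimately show ?thesis
    unfolding eta_w_def by (rule theI)
qed

lemma Pbar_minus_w_subset: "Pbar_minus_w N \<beta> w \<subseteq> Pbar N"
  using eta_w_spec by (auto simp: Pbar_minus_w_def Pbar_minus_def Pbar_def)

lemma Pbar_minus_w_step:
  assumes "\<eta> \<in> Pbar_minus_w N \<beta> w" "m \<in> {1..<N}"
  shows "\<eta> m \<le> \<eta> (Suc m)" and "\<eta> m = \<eta> (Suc m) \<Longrightarrow> \<not> simple_in_image N \<beta> w m"
proof -
  obtain \<eta>\<^sub>0 where \<eta>: "\<eta> = (\<lambda>i. \<eta>\<^sub>0 i + eta_w N \<beta> w i)" and "\<eta>\<^sub>0 \<in> Pbar_minus N"
    using assms(1) by (auto simp: Pbar_minus_w_def)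
  then have "\<eta>\<^sub>0 m \<le> \<eta>\<^sub>0 (Suc m)"
    using assms(2) by (auto simp: Pbar_minus_def)
  moreover have "eta_w N \<beta> w m - eta_w N \<beta> w (Suc m) = (if simple_in_image N \<beta> w m then -1 else 0)"
    using eta_w_spec assms(2) by blast
  ultimately show "\<eta> m \<le> \<eta> (Suc m)" and "\<eta> m = \<eta> (Suc m) \<Longrightarrow> \<not> simple_in_image N \<beta> w m"
    unfolding \<eta> by (auto split: if_splits)
qed

definition Xbeta_key :: "nat list \<Rightarrow> (nat \<Rightarrow> nat) \<Rightarrow> (nat \<Rightarrow> int) \<Rightarrow> nat \<Rightarrow> int \<times> int \<times> nat" where
  "Xbeta_key \<beta> w \<eta> m = (\<eta> m, - int (blk \<beta> (inv w m)), inv w m)"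

lemma Wbar_min_not_simple_less:
  assumes op: "ordered_partition N \<beta>" and w: "w \<in> Wbar_min N \<beta>"
    and m: "m \<in> {1..<N}" and not_simple: "\<not> simple_in_image N \<beta> w m"
  shows "(- int (blk \<beta> (inv w m)), inv w m) < (- int (blk \<beta> (inv w (Suc m))), inv w (Suc m))"
proof -
  have wp: "w permutes {1..N}"
    using w by (simp add: Wbar_min_def Wbar_def)
  define i j where "i = inv w m" and "j = inv w (Suc m)"
  have ij: "i \<in> {1..N}" "j \<in> {1..N}" "w i = m" "w j = Suc m"
    using m permutes_in_image[OF permutes_inv[OF wp]] permutes_inverses(1)[OF wp]
    unfolding i_def j_def by auto
  then have "i \<noteq> j" by auto
  have "(- int (blk \<beta> i), i) < (- int (blk \<beta> j), j)"
  proof (cases "same_block \<beta> i j")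
    case same: True
    have "\<not> j < i"
    proof
      assume "j < i"
      then have "w j < w i"
        using Wbar_min_less_on_block[OF op w ij(2,1)] same by (simp add: same_block_def)
      then show False using ij by simp
    qed
    then show ?thesis
      using \<open>i \<noteq> j\<close> same by (simp add: same_block_def)
  next
    case different: False
    then have "\<not> i < j"
      using not_simple ij unfolding simple_in_image_def by blast
    then have "blk \<beta> j < blk \<beta> i"
      using blk_mono[OF op, of j i] ij \<open>i \<noteq> j\<close> different by (simp add: same_block_def)
    then show ?thesis by simp
  qed
  then show ?thesis
    unfolding i_def j_def .
qed

lemma Xbeta_key_strict_mono_on:
  assumes op: "ordered_partition N \<beta>" and w: "w \<in> Wbar_min N \<beta>" and \<eta>: "\<eta> \<in> Pbar_minus_w N \<beta> w"
  shows "strict_mono_on {1..N} (Xbeta_key \<beta> w \<eta>)"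
proof (rule strict_mono_on_if_Suc_less)
  fix m assume m: "m \<in> {1..<N}"
  show "Xbeta_key \<beta> w \<eta> m < Xbeta_key \<beta> w \<eta> (Suc m)"
  proof (cases "\<eta> m = \<eta> (Suc m)")
    case False
    then show ?thesis using Pbar_minus_w_step(1)[OF \<eta> m] by (simp add: Xbeta_key_def)
  next
    case True
    then show ?thesis
      using Wbar_min_not_simple_less[OF op w m Pbar_minus_w_step(2)[OF \<eta> m True]]
      by (simp add: Xbeta_key_def)
  qed
qed

lemma strict_mono_on_self_le:
  fixes p :: "nat \<Rightarrow> nat"
  assumes mono: "strict_mono_on {l..u} p" and into: "p ` {l..u} \<subseteq> {l..u}" and i: "i \<in> {l..u}"
  shows "i \<le> p i"
proof -
  have "p ` {l..i} \<subseteq> {l..p i}"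
  proof (rule image_subsetI)
    fix x assume x: "x \<in> {l..i}"
    then have "x \<in> {l..u}" using i by auto
    then have "p x \<in> {l..u}" using into by blast
    then show "p x \<in> {l..p i}"
      using strict_mono_on_leD[OF mono \<open>x \<in> {l..u}\<close> i] x by auto
  qed
  moreover have "inj_on p {l..i}"
    using i by (intro inj_on_subset[OF strict_mono_on_imp_inj_on[OF mono]]) auto
  ultimately have "card {l..i} \<le> card {l..p i}"
    by (intro card_inj_on_le) auto
  then show ?thesis
    using i by simp linarith
qed

lemma permutes_strict_mono_on_eq_id:
  fixes p :: "nat \<Rightarrow> nat"
  assumes p: "p permutes {l..u}" and mono: "strict_mono_on {l..u} p"
  shows "p = id"
proof -
  have inv_mono: "strict_mono_on {l..u} (inv p)"
  proof (rule strict_mono_onI)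
    fix i j assume ij: "i \<in> {l..u}" "j \<in> {l..u}" "i < j"
    show "inv p i < inv p j"
    proof (rule ccontr)
      assume "\<not> inv p i < inv p j"
      moreover have "inv p i \<in> {l..u}" "inv p j \<in> {l..u}"
        using ij permutes_in_image[OF permutes_inv[OF p]] by simp_all
      ultimately have "p (inv p j) \<le> p (inv p i)"
        by (intro strict_mono_on_leD[OF mono]) auto
      then show False
        using ij permutes_inverses(1)[OF p] by simp
    qed
  qed
  have "p i = i" if i: "i \<in> {l..u}" for i
  proof (rule antisym)
    have "p i \<in> {l..u}" using permutes_in_image[OF p] i by simp
    then have "p i \<le> inv p (p i)"
      using strict_mono_on_self_le[OF inv_mono] permutes_in_image[OF permutes_inv[OF p]] by blast
    then show "p i \<le> i"
      using permutes_inverses(2)[OF p] by simp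
    show "i \<le> p i"
      using strict_mono_on_self_le[OF mono] permutes_in_image[OF p] i by blast
  qed
  then show ?thesis
    using permutes_not_in[OF p] by (metis eq_id_iff)
qed

lemma permutes_eq_id_if_strict_mono_on_comp:
  fixes f :: "nat \<Rightarrow> 'a::linorder"
  assumes p: "p permutes {l..u}" and f: "strict_mono_on {l..u} f"
    and fp: "strict_mono_on {l..u} (f \<circ> p)"
  shows "p = id"
proof (rule permutes_strict_mono_on_eq_id[OF p], rule strict_mono_onI, rule ccontr)
  fix i j assume ij: "i \<in> {l..u}" "j \<in> {l..u}" "i < j" and "\<not> p i < p j"
  moreover have "p i \<in> {l..u}" "p j \<in> {l..u}"
    using ij permutes_in_image[OF p] by simp_all
  ultimately have "f (p j) \<le> f (p i)"
    by (intro strict_mono_on_leD[OF f]) auto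
  then show False
    using strict_mono_onD[OF fp ij] by simp
qed

lemma aff_act_comp_perm:
  assumes "bij u" "bij w"
  shows "aff_act (u, \<lambda>_. 0) (aff_act (w, \<rho>) z) = aff_act (u \<circ> w, \<rho>) z"
  using assms by (cases z) (simp add: aff_act_def o_inv_distrib)

lemma in_orbit_self: "z \<in> orbit N z"
proof -
  have "aff_act (id, \<lambda>_. 0) z = z"
    by (cases z) (simp add: aff_act_def)
  then show ?thesis
    unfolding orbit_def Wbar_def by (intro CollectI exI[of _ id]) (simp add: permutes_id)
qed

lemma Xbeta_subset_Wgrp: "Xbeta N \<beta> \<subseteq> Wgrp N"
  using Pbar_minus_w_subset
  by (fastforce simp: Xbeta_def Wgrp_def Wbar_min_def Wbar_def Pbar_def dest: permutes_not_in)

lemma Xbeta_key_comp_perm: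
  assumes "bij u" "bij w" and \<eta>: "\<eta>' \<circ> (u \<circ> w) = \<eta> \<circ> w"
  shows "Xbeta_key \<beta> (u \<circ> w) \<eta>' = Xbeta_key \<beta> w \<eta> \<circ> inv u"
proof -
  have "\<eta>' y = \<eta> (inv u y)" for y
    using fun_cong[OF \<eta>, of "inv w (inv u y)"] assms(1,2) by (simp add: surj_f_inv_f bij_is_surj)
  then show ?thesis
    using assms(1,2) by (simp add: Xbeta_key_def fun_eq_iff o_inv_distrib)
qed

theorem inj_on_orbit_Xbeta:
  assumes op: "ordered_partition N \<beta>"
    and td: "(a, k) \<in> tdual_beta N \<beta>" and g: "generic N \<beta> (a, k)" and k: "k \<noteq> 0"
  shows "inj_on (\<lambda>x. orbit N (aff_act x (a, k))) (Xbeta N \<beta>)"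
proof (rule inj_onI)
  fix x x' assume x: "x \<in> Xbeta N \<beta>" and x': "x' \<in> Xbeta N \<beta>"
    and eq: "orbit N (aff_act x (a, k)) = orbit N (aff_act x' (a, k))"
  obtain w \<eta> where xw: "x = (w, \<eta> \<circ> w)" "w \<in> Wbar_min N \<beta>" "\<eta> \<in> Pbar_minus_w N \<beta> w"
    using x by (auto simp: Xbeta_def)
  obtain w' \<eta>' where xw': "x' = (w', \<eta>' \<circ> w')" "w' \<in> Wbar_min N \<beta>" "\<eta>' \<in> Pbar_minus_w N \<beta> w'"
    using x' by (auto simp: Xbeta_def)
  have w: "w permutes {1..N}"
    using xw(2) by (simp add: Wbar_min_def Wbar_def)
  have "aff_act x' (a, k) \<in> orbit N (aff_act x (a, k))"
    using in_orbit_self eq by metis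
  then obtain u where u: "u permutes {1..N}"
    and "aff_act (u, \<lambda>_. 0) (aff_act x (a, k)) = aff_act x' (a, k)"
    by (auto simp: orbit_def Wbar_def)
  then have "aff_act (u \<circ> w, \<eta> \<circ> w) (a, k) = aff_act x' (a, k)"
    using xw(1) aff_act_comp_perm[OF permutes_bij[OF u] permutes_bij[OF w]] by simp
  moreover have "(u \<circ> w, \<eta> \<circ> w) \<in> Wgrp N"
    using x xw(1) Xbeta_subset_Wgrp permutes_compose[OF w u] by (auto simp: Wgrp_def Wbar_def)
  ultimately have x'_eq: "x' = (u \<circ> w, \<eta> \<circ> w)"
    using x' Xbeta_subset_Wgrp inj_onD[OF inj_on_aff_act[OF op td g k]] by blast
  then have "Xbeta_key \<beta> w' \<eta>' = Xbeta_key \<beta> w \<eta> \<circ> inv u"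
    using xw'(1) Xbeta_key_comp_perm[OF permutes_bij[OF u] permutes_bij[OF w]] by auto
  then have "inv u = id"
    using permutes_eq_id_if_strict_mono_on_comp[OF permutes_inv[OF u]]
      Xbeta_key_strict_mono_on[OF op xw(2,3)] Xbeta_key_strict_mono_on[OF op xw'(2,3)]
    by simp
  then have "u = id"
    by (metis inv_id inv_inv_eq permutes_bij[OF u])
  then show "x = x'"
    using x'_eq xw(1) by simp
qed

theorem proposition2p21:
  fixes N :: nat and \<beta> :: "nat list" and a :: "nat \<Rightarrow> complex" and k :: complex
  assumes "2 \<le> N"
    and "ordered_partition N \<beta>"
    and "(a, k) \<in> tdual_beta N \<beta>"
    and "generic N \<beta> (a, k)"
    and "k \<noteq> 0"
  shows "inj_on (\<lambda>x. aff_act x (a, k)) (Wgrp N)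
       \<and> inj_on (\<lambda>x. orbit N (aff_act x (a, k))) (Xbeta N \<beta>)
       \<and> (\<forall>b. b \<in> tbar_beta N \<beta> \<and> generic_bar N \<beta> b \<longrightarrow> inj_on (\<lambda>w. perm_act w b) (Wbar N))"
  using inj_on_aff_act[OF assms(2-5)] inj_on_orbit_Xbeta[OF assms(2-5)] inj_on_perm_act[OF assms(2)]
  by blast

end
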